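(* If $\mathbf c_1,\mathbf c_2\in\mathrm{GF}(q^m)^n$ and $d_{\mathrm R}(\mathbf c_1,\mathbf c_2)=r$, then for $0\le s\le r$, $$|B_s(\mathbf c_1)\cap B_{r-s}(\mathbf c_2)|=q^{s(r-s)}{r\brack s}.$$
   Context: The rank $\mathrm{rk}(\mathbf x)$ of $\mathbf x\in\mathrm{GF}(q^m)^n$ is the maximum number of its coordinates linearly independent over $\mathrm{GF}(q)$, and $d_{\mathrm R}(\mathbf x,\mathbf y)=\mathrm{rk}(\mathbf x-\mathbf y)$. $B_r(\mathbf x)$ is the set of vectors within rank distance $r$ of $\mathbf x$. ${r\brack s}$ is the Gaussian binomial coefficient, the number of $s$-dimensional subspaces of $\mathrm{GF}(q)^r$. *)

theory Defs
  imports Main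
begin

text \<open>GF(q) is modelled as a subfield K of a finite field 'a = GF(q^m); q = card K.
  Vectors of length n over 'a are functions nat => 'a vanishing from index n on.\<close>

definition is_subfield :: "'a::field set \<Rightarrow> bool" where
  "is_subfield K \<longleftrightarrow> 0 \<in> K \<and> 1 \<in> K \<and>
     (\<forall>x\<in>K. \<forall>y\<in>K. x + y \<in> K \<and> x * y \<in> K) \<and>
     (\<forall>x\<in>K. - x \<in> K) \<and> (\<forall>x\<in>K. x \<noteq> 0 \<longrightarrow> inverse x \<in> K)"

definition vecspace :: "nat \<Rightarrow> (nat \<Rightarrow> 'a::zero) set" where
  "vecspace n = {x. \<forall>i\<ge>n. x i = 0}"

definition lin_indep_over :: "'a::field set \<Rightarrow> (nat \<Rightarrow> 'a) \<Rightarrow> nat set \<Rightarrow> bool" where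
  "lin_indep_over K x T \<longleftrightarrow>
     (\<forall>c. (\<forall>i\<in>T. c i \<in> K) \<longrightarrow> (\<Sum>i\<in>T. c i * x i) = 0 \<longrightarrow> (\<forall>i\<in>T. c i = 0))"

definition rk :: "'a::field set \<Rightarrow> nat \<Rightarrow> (nat \<Rightarrow> 'a) \<Rightarrow> nat" where
  "rk K n x = Max {card T | T. T \<subseteq> {..<n} \<and> lin_indep_over K x T}"

definition dR :: "'a::field set \<Rightarrow> nat \<Rightarrow> (nat \<Rightarrow> 'a) \<Rightarrow> (nat \<Rightarrow> 'a) \<Rightarrow> nat" where
  "dR K n x y = rk K n (\<lambda>i. x i - y i)"

definition rball :: "'a::field set \<Rightarrow> nat \<Rightarrow> nat \<Rightarrow> (nat \<Rightarrow> 'a) \<Rightarrow> (nat \<Rightarrow> 'a) set" where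
  "rball K n r c = {x \<in> vecspace n. dR K n c x \<le> r}"

definition Kvecs :: "'a::field set \<Rightarrow> nat \<Rightarrow> (nat \<Rightarrow> 'a) set" where
  "Kvecs K r = {v. (\<forall>i<r. v i \<in> K) \<and> (\<forall>i\<ge>r. v i = 0)}"

definition Kcomb :: "(nat \<Rightarrow> 'a::field) \<Rightarrow> (nat \<Rightarrow> nat \<Rightarrow> 'a) \<Rightarrow> nat \<Rightarrow> (nat \<Rightarrow> 'a)" where
  "Kcomb c vs s = (\<lambda>i. \<Sum>j<s. c j * vs j i)"

definition is_Ksubspace :: "'a::field set \<Rightarrow> nat \<Rightarrow> (nat \<Rightarrow> 'a) set \<Rightarrow> bool" where
  "is_Ksubspace K r V \<longleftrightarrow> V \<subseteq> Kvecs K r \<and> (\<lambda>_. 0) \<in> V \<and>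
     (\<forall>u\<in>V. \<forall>v\<in>V. (\<lambda>i. u i + v i) \<in> V) \<and> (\<forall>a\<in>K. \<forall>v\<in>V. (\<lambda>i. a * v i) \<in> V)"

definition has_Kdim :: "'a::field set \<Rightarrow> (nat \<Rightarrow> 'a) set \<Rightarrow> nat \<Rightarrow> bool" where
  "has_Kdim K V s \<longleftrightarrow> (\<exists>vs. (\<forall>j<s. vs j \<in> V) \<and>
     (\<forall>c. (\<forall>j<s. c j \<in> K) \<longrightarrow> Kcomb c vs s = (\<lambda>_. 0) \<longrightarrow> (\<forall>j<s. c j = 0)) \<and>
     V = {Kcomb c vs s | c. \<forall>j<s. c j \<in> K})"

definition qbinom :: "'a::field set \<Rightarrow> nat \<Rightarrow> nat \<Rightarrow> nat" where
  "qbinom K r s = card {V. is_Ksubspace K r V \<and> has_Kdim K V s}"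

end

(*
  Let e = c1 - c2, let W be the GF(q)-span of its first n coordinates (so dim W = r), and for a
  vector x let U(x) and V(x) be the spans of the coordinates of c1 - x and c2 - x.  Dimensions
  are measured by cardinality throughout: a d-dimensional GF(q)-space has q^d elements.

  If x lies in both balls, then dim U(x) <= s and dim V(x) <= r - s, while e = (c1 - x) - (c2 - x)
  gives W <= U(x) + V(x); counting elements forces W = U(x) + V(x) with dim U(x) = s and
  dim V(x) = r - s.  Conversely, every ordered basis f of W determines exactly one such x, by
  splitting each coordinate of e along the first s and the last r - s vectors of f, and the bases
  that determine x are exactly those whose first s vectors form a basis of U(x) and whose last
  r - s vectors form a basis of V(x).  With N(d, k) = prod_{i<k} (q^d - q^i), the number of
  linearly independent k-tuples in a d-dimensional space, this gives
    |X| * N(s, s) * N(r - s, r - s) = N(r, r) = q^(s(r-s)) * N(r, s) * N(r - s, r - s)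
  for the intersection X of the two balls, and grouping the independent s-tuples of GF(q)^r by
  their span gives [r s] * N(s, s) = N(r, s).
*)
theory Submission
  imports Defs "HOL.Modules" "HOL-Library.FuncSet" "HOL-Library.Function_Algebras"
    "HOL-Library.Set_Algebras"
begin

section \<open>Finite subfields and elementary counting\<close>

lemma subfield_0_1:
  assumes "is_subfield K"
  shows "0 \<in> K" "1 \<in> K"
  using assms unfolding is_subfield_def by auto

lemma subfield_closed:
  assumes "is_subfield K"
  shows "x \<in> K \<Longrightarrow> y \<in> K \<Longrightarrow> x + y \<in> K" "x \<in> K \<Longrightarrow> y \<in> K \<Longrightarrow> x * y \<in> K"
    "x \<in> K \<Longrightarrow> - x \<in> K" "x \<in> K \<Longrightarrow> y \<in> K \<Longrightarrow> x - y \<in> K"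
    "x \<in> K \<Longrightarrow> inverse x \<in> K"
  using assms unfolding is_subfield_def diff_conv_add_uminus by (blast, blast, blast, blast, metis inverse_zero)

lemma card_subfield_ge_2:
  fixes K :: "'a::field set"
  assumes "is_subfield K" "finite K"
  shows "2 \<le> card K"
proof -
  have "card {0, 1::'a} \<le> card K"
    using assms subfield_0_1[OF assms(1)] by (intro card_mono) auto
  then show ?thesis by simp
qed

definition num_indep_tuples :: "nat \<Rightarrow> nat \<Rightarrow> nat \<Rightarrow> nat" where
  "num_indep_tuples q d k = (\<Prod>i<k. q ^ d - q ^ i)"

lemma num_indep_tuples_split:
  assumes "s \<le> r"
  shows "num_indep_tuples q r r
    = q ^ (s * (r - s)) * num_indep_tuples q r s * num_indep_tuples q (r - s) (r - s)"
proof -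
  obtain t where t: "r = s + t" using assms le_Suc_ex by blast
  have prod_add: "(\<Prod>i<s + t. f i) = (\<Prod>i<s. f i) * (\<Prod>j<t. f (s + j))" for f :: "nat \<Rightarrow> nat"
    by (induction t) (auto simp: mult.assoc)
  have "num_indep_tuples q r r = num_indep_tuples q r s * (\<Prod>j<t. q ^ r - q ^ (s + j))"
    unfolding num_indep_tuples_def t prod_add ..
  also have "(\<Prod>j<t. q ^ r - q ^ (s + j)) = (\<Prod>j<t. q ^ s * (q ^ t - q ^ j))"
    unfolding t by (simp add: power_add diff_mult_distrib2)
  also have "\<dots> = q ^ (s * t) * num_indep_tuples q t t"
    unfolding num_indep_tuples_def by (simp add: prod.distrib power_mult)
  finally show ?thesis using t by simp
qed

lemma num_indep_tuples_pos: "2 \<le> q \<Longrightarrow> 0 < num_indep_tuples q k k"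
  unfolding num_indep_tuples_def by (intro prod_pos) (auto intro: power_strict_increasing)

lemma card_by_uniform_fibres:
  assumes "finite A" "finite B"
    and "\<And>b. b \<in> B \<Longrightarrow> \<exists>!a. a \<in> A \<and> R a b"
    and "\<And>a. a \<in> A \<Longrightarrow> card {b \<in> B. R a b} = k"
  shows "card B = card A * k"
proof -
  have "B = (\<Union>a\<in>A. {b \<in> B. R a b})"
    using assms(3) by blast
  also have "card \<dots> = (\<Sum>a\<in>A. card {b \<in> B. R a b})"
    using assms(1-3) by (intro card_UN_disjoint) auto
  finally show ?thesis
    using assms(4) by simp
qed

lemma card_PiE_Un_restrict:
  fixes F :: "'a \<Rightarrow> 'b set"
  assumes "A \<inter> B = {}"
  shows "card {f \<in> PiE (A \<union> B) F. P (restrict f A) \<and> Q (restrict f B)}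
    = card {g \<in> PiE A F. P g} * card {h \<in> PiE B F. Q h}"
proof -
  define join :: "('a \<Rightarrow> 'b) \<times> ('a \<Rightarrow> 'b) \<Rightarrow> 'a \<Rightarrow> 'b"
    where "join = (\<lambda>(g, h) i. if i \<in> A then g i else h i)"
  have restrict_join: "restrict (join (g, h)) A = g" "restrict (join (g, h)) B = h"
    if "g \<in> extensional A" "h \<in> extensional B" for g h
    using that assms by (auto simp: join_def fun_eq_iff extensional_def)
  have "bij_betw (\<lambda>f. (restrict f A, restrict f B))
      {f \<in> PiE (A \<union> B) F. P (restrict f A) \<and> Q (restrict f B)}
      ({g \<in> PiE A F. P g} \<times> {h \<in> PiE B F. Q h})"
  proof (rule bij_betw_byWitness[where f' = join])
    show "\<forall>f\<in>{f \<in> PiE (A \<union> B) F. P (restrict f A) \<and> Q (restrict f B)}.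
        join (restrict f A, restrict f B) = f"
      by (auto simp: join_def PiE_iff extensional_def fun_eq_iff)
    show "join ` ({g \<in> PiE A F. P g} \<times> {h \<in> PiE B F. Q h})
        \<subseteq> {f \<in> PiE (A \<union> B) F. P (restrict f A) \<and> Q (restrict f B)}"
      using assms by (auto simp: restrict_join PiE_iff) (auto simp: join_def extensional_def)
  qed (auto simp: restrict_join PiE_iff)
  then show ?thesis
    by (simp add: bij_betw_same_card card_cartesian_product)
qed

lemma set_plus_eq_if_card_bounds:
  fixes U V W :: "'b::plus set"
  assumes "finite U" "finite V" "W \<subseteq> U + V" "0 < q"
    and "card U \<le> q ^ s" "card V \<le> q ^ t" "card W = q ^ (s + t)"
  shows "W = U + V" "card U = q ^ s" "card V = q ^ t"
proof -
  have fin: "finite (U + V)"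
    using assms(1,2) by (rule finite_set_plus)
  have "card W \<le> card (U + V)"
    using fin assms(3) by (rule card_mono)
  moreover have "card (U + V) \<le> card U * card V"
    unfolding set_plus_image
    by (metis card_cartesian_product card_image_le finite_cartesian_product assms(1,2))
  moreover have "card U * card V \<le> q ^ s * q ^ t"
    using assms(5,6) by (rule mult_le_mono)
  ultimately have eq: "card (U + V) = card W" "card U * card V = q ^ s * q ^ t"
    using assms(7) by (simp_all add: power_add)
  show "W = U + V"
    using fin assms(3) eq(1) by (intro card_seteq) auto
  show "card U = q ^ s" "card V = q ^ t"
    using eq(2) assms(4-6) by (metis le_antisym mult_le_cancel2 zero_less_power nat_mult_le_cancel_disj)+
qed

section \<open>Linear algebra over a finite subfield\<close>

locale subfield_module = module scale
  for scale :: "'a::field \<Rightarrow> 'b::ab_group_add \<Rightarrow> 'b" (infixr \<open>*s\<close> 75) +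
  fixes K :: "'a set"
  assumes subfield: "is_subfield K" and finite_K: "finite K"
begin

lemmas K_0_1 = subfield_0_1[OF subfield]
lemmas K_closed = subfield_closed[OF subfield]

definition Klincomb :: "'i set \<Rightarrow> ('i \<Rightarrow> 'a) \<Rightarrow> ('i \<Rightarrow> 'b) \<Rightarrow> 'b" where
  "Klincomb I c v = (\<Sum>i\<in>I. c i *s v i)"

definition Kspan :: "'i set \<Rightarrow> ('i \<Rightarrow> 'b) \<Rightarrow> 'b set" where
  "Kspan I v = {Klincomb I c v | c. \<forall>i\<in>I. c i \<in> K}"

definition Kindep :: "'i set \<Rightarrow> ('i \<Rightarrow> 'b) \<Rightarrow> bool" where
  "Kindep I v \<longleftrightarrow> (\<forall>c. (\<forall>i\<in>I. c i \<in> K) \<longrightarrow> Klincomb I c v = 0 \<longrightarrow> (\<forall>i\<in>I. c i = 0))"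

definition Ksubspace :: "'b set \<Rightarrow> bool" where
  "Ksubspace S \<longleftrightarrow> 0 \<in> S \<and> (\<forall>x\<in>S. \<forall>y\<in>S. x + y \<in> S) \<and> (\<forall>a\<in>K. \<forall>x\<in>S. a *s x \<in> S)"

lemma KindepD:
  "Kindep I v \<Longrightarrow> (\<And>i. i \<in> I \<Longrightarrow> c i \<in> K) \<Longrightarrow> Klincomb I c v = 0 \<Longrightarrow> i \<in> I \<Longrightarrow> c i = 0"
  unfolding Kindep_def by blast

lemma Klincomb_cong:
  "(\<And>i. i \<in> I \<Longrightarrow> c i = c' i) \<Longrightarrow> (\<And>i. i \<in> I \<Longrightarrow> v i = v' i)
    \<Longrightarrow> Klincomb I c v = Klincomb I c' v'"
  unfolding Klincomb_def by (rule sum.cong) auto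

lemma Kspan_cong:
  assumes "\<And>i. i \<in> I \<Longrightarrow> v i = v' i"
  shows "Kspan I v = Kspan I v'"
proof -
  have "Klincomb I c v = Klincomb I c v'" for c
    using assms by (rule Klincomb_cong[OF refl])
  then show ?thesis
    unfolding Kspan_def by simp
qed

lemma Kindep_cong:
  assumes "\<And>i. i \<in> I \<Longrightarrow> v i = v' i"
  shows "Kindep I v = Kindep I v'"
proof -
  have "Klincomb I c v = Klincomb I c v'" for c
    using assms by (rule Klincomb_cong[OF refl])
  then show ?thesis
    unfolding Kindep_def by simp
qed

lemma Klincomb_diff: "Klincomb I c v - Klincomb I d v = Klincomb I (\<lambda>i. c i - d i) v"
  unfolding Klincomb_def by (simp add: sum_subtractf scale_left_diff_distrib)

lemma Klincomb_minus: "- Klincomb I c v = Klincomb I (\<lambda>i. - c i) v"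
  unfolding Klincomb_def by (simp add: sum_negf)

lemma Klincomb_scale: "a *s Klincomb I c v = Klincomb I (\<lambda>i. a * c i) v"
  unfolding Klincomb_def by (simp add: scale_sum_right del: scale_scale) (simp add: mult.commute)

lemma Klincomb_union:
  "finite A \<Longrightarrow> finite B \<Longrightarrow> A \<inter> B = {} \<Longrightarrow> Klincomb (A \<union> B) c v = Klincomb A c v + Klincomb B c v"
  unfolding Klincomb_def by (rule sum.union_disjoint)

lemma Ksubspace_0: "Ksubspace S \<Longrightarrow> 0 \<in> S"
  and Ksubspace_add: "Ksubspace S \<Longrightarrow> x \<in> S \<Longrightarrow> y \<in> S \<Longrightarrow> x + y \<in> S"
  and Ksubspace_scale: "Ksubspace S \<Longrightarrow> a \<in> K \<Longrightarrow> x \<in> S \<Longrightarrow> a *s x \<in> S"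
  unfolding Ksubspace_def by blast+

lemma Ksubspace_neg: "Ksubspace S \<Longrightarrow> x \<in> S \<Longrightarrow> - x \<in> S"
  using Ksubspace_scale[of S "- 1" x] K_0_1 K_closed by simp

lemma Ksubspace_diff: "Ksubspace S \<Longrightarrow> x \<in> S \<Longrightarrow> y \<in> S \<Longrightarrow> x - y \<in> S"
  unfolding diff_conv_add_uminus by (intro Ksubspace_add Ksubspace_neg)

lemma Ksubspace_Klincomb:
  assumes "Ksubspace S" "\<And>i. i \<in> I \<Longrightarrow> v i \<in> S" "\<And>i. i \<in> I \<Longrightarrow> c i \<in> K"
  shows "Klincomb I c v \<in> S"
  using assms(2,3) unfolding Klincomb_def
  by (induction I rule: infinite_finite_induct) (auto intro: Ksubspace_0 Ksubspace_add Ksubspace_scale assms(1))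

lemma Ksubspace_Kspan: "Ksubspace (Kspan I v)"
  unfolding Ksubspace_def
proof (intro conjI ballI)
  have "0 = Klincomb I (\<lambda>_. 0) v"
    unfolding Klincomb_def by simp
  then show "0 \<in> Kspan I v"
    unfolding Kspan_def using K_0_1 by blast
next
  fix x y assume "x \<in> Kspan I v" "y \<in> Kspan I v"
  then obtain c d where cd: "x = Klincomb I c v" "y = Klincomb I d v" "\<forall>i\<in>I. c i \<in> K" "\<forall>i\<in>I. d i \<in> K"
    unfolding Kspan_def by blast
  then have "x + y = Klincomb I (\<lambda>i. c i + d i) v"
    unfolding Klincomb_def by (simp add: sum.distrib scale_left_distrib)
  moreover have "\<forall>i\<in>I. c i + d i \<in> K"
    using cd(3,4) K_closed by blast
  ultimately show "x + y \<in> Kspan I v"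
    unfolding Kspan_def by blast
next
  fix a x assume "a \<in> K" "x \<in> Kspan I v"
  then obtain c where c: "x = Klincomb I c v" "\<forall>i\<in>I. c i \<in> K"
    unfolding Kspan_def by blast
  then have "a *s x = Klincomb I (\<lambda>i. a * c i) v"
    by (simp add: Klincomb_scale)
  moreover have "\<forall>i\<in>I. a * c i \<in> K"
    using c(2) \<open>a \<in> K\<close> K_closed by blast
  ultimately show "a *s x \<in> Kspan I v"
    unfolding Kspan_def by blast
qed

lemma Ksubspace_set_plus:
  assumes "Ksubspace U" "Ksubspace V"
  shows "Ksubspace (U + V)"
  unfolding Ksubspace_def
proof (intro conjI ballI)
  show "0 \<in> U + V"
    using set_plus_intro[OF Ksubspace_0 Ksubspace_0, OF assms] by simp
next
  fix x y assume "x \<in> U + V" "y \<in> U + V"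
  then obtain a b a' b' where "x = a + b" "y = a' + b'" "a \<in> U" "b \<in> V" "a' \<in> U" "b' \<in> V"
    by (auto elim!: set_plus_elim)
  moreover have "a + a' \<in> U" "b + b' \<in> V"
    using assms calculation by (simp_all add: Ksubspace_add)
  ultimately show "x + y \<in> U + V"
    using set_plus_intro[of "a + a'" U "b + b'" V] by (simp add: ac_simps)
next
  fix c x assume "c \<in> K" "x \<in> U + V"
  then obtain a b where "x = a + b" "a \<in> U" "b \<in> V"
    by (auto elim!: set_plus_elim)
  then show "c *s x \<in> U + V"
    using assms \<open>c \<in> K\<close> by (simp add: scale_right_distrib set_plus_intro Ksubspace_scale)
qed

lemma Kspan_subset_iff:
  assumes "finite I" "Ksubspace S"
  shows "Kspan I v \<subseteq> S \<longleftrightarrow> (\<forall>i\<in>I. v i \<in> S)"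
proof
  have "v i \<in> Kspan I v" if "i \<in> I" for i
  proof -
    have "v i = Klincomb I (\<lambda>j. if j = i then 1 else 0) v"
      unfolding Klincomb_def using assms(1) that by (simp add: if_distrib[of "\<lambda>a. a *s _"] cong: if_cong)
    moreover have "\<forall>j\<in>I. (if j = i then 1 else 0) \<in> K"
      using K_0_1 by simp
    ultimately show ?thesis
      unfolding Kspan_def by blast
  qed
  then show "Kspan I v \<subseteq> S \<Longrightarrow> \<forall>i\<in>I. v i \<in> S"
    by blast
  show "\<forall>i\<in>I. v i \<in> S \<Longrightarrow> Kspan I v \<subseteq> S"
    unfolding Kspan_def by (auto intro: Ksubspace_Klincomb[OF assms(2)])
qed

lemma Kspan_superset: "finite I \<Longrightarrow> i \<in> I \<Longrightarrow> v i \<in> Kspan I v"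
  using Kspan_subset_iff[OF _ Ksubspace_Kspan] by blast

lemma Kspan_mono:
  assumes "finite B" "A \<subseteq> B"
  shows "Kspan A v \<subseteq> Kspan B v"
proof -
  have "finite A"
    using assms finite_subset by blast
  moreover have "\<forall>i\<in>B. v i \<in> Kspan B v"
    using Kspan_subset_iff[OF assms(1), of "Kspan B v" v] Ksubspace_Kspan by blast
  ultimately show ?thesis
    using assms(2) Kspan_subset_iff[OF \<open>finite A\<close>, of "Kspan B v" v] Ksubspace_Kspan by blast
qed

lemma Kspan_union:
  assumes "finite A" "finite B" "A \<inter> B = {}"
  shows "Kspan (A \<union> B) v = Kspan A v + Kspan B v"
proof
  show "Kspan (A \<union> B) v \<subseteq> Kspan A v + Kspan B v"
  proof
    fix x assume "x \<in> Kspan (A \<union> B) v"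
    then obtain c where c: "x = Klincomb (A \<union> B) c v" "\<forall>i\<in>A \<union> B. c i \<in> K"
      unfolding Kspan_def by blast
    then have "Klincomb A c v \<in> Kspan A v" "Klincomb B c v \<in> Kspan B v"
      unfolding Kspan_def by auto
    then show "x \<in> Kspan A v + Kspan B v"
      unfolding c(1) Klincomb_union[OF assms] by (rule set_plus_intro)
  qed
  show "Kspan A v + Kspan B v \<subseteq> Kspan (A \<union> B) v"
    using Kspan_mono[of "A \<union> B" A v] Kspan_mono[of "A \<union> B" B v] assms
    by (auto elim!: set_plus_elim intro!: Ksubspace_add[OF Ksubspace_Kspan])
qed

lemma Kspan_eq_image: "Kspan I v = (\<lambda>c. Klincomb I c v) ` PiE I (\<lambda>_. K)"
proof
  show "Kspan I v \<subseteq> (\<lambda>c. Klincomb I c v) ` PiE I (\<lambda>_. K)"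
  proof
    fix x assume "x \<in> Kspan I v"
    then obtain c where c: "x = Klincomb I c v" "\<forall>i\<in>I. c i \<in> K"
      unfolding Kspan_def by blast
    then have "x = Klincomb I (restrict c I) v"
      by (auto intro: Klincomb_cong)
    moreover have "restrict c I \<in> PiE I (\<lambda>_. K)"
      using c(2) by simp
    ultimately show "x \<in> (\<lambda>c. Klincomb I c v) ` PiE I (\<lambda>_. K)"
      by blast
  qed
  show "(\<lambda>c. Klincomb I c v) ` PiE I (\<lambda>_. K) \<subseteq> Kspan I v"
    unfolding Kspan_def by (auto simp: PiE_iff)
qed

lemma finite_Kspan: "finite I \<Longrightarrow> finite (Kspan I v)"
  unfolding Kspan_eq_image using finite_K by (intro finite_imageI finite_PiE)

lemma card_Kspan_le: "finite I \<Longrightarrow> card (Kspan I v) \<le> card K ^ card I"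
  unfolding Kspan_eq_image by (metis card_image_le card_funcsetE finite_PiE finite_K)

lemma inj_on_Klincomb_iff: "inj_on (\<lambda>c. Klincomb I c v) (PiE I (\<lambda>_. K)) \<longleftrightarrow> Kindep I v"
proof
  assume inj: "inj_on (\<lambda>c. Klincomb I c v) (PiE I (\<lambda>_. K))"
  show "Kindep I v"
    unfolding Kindep_def
  proof (intro allI impI ballI)
    fix c i assume c: "\<forall>i\<in>I. c i \<in> K" "Klincomb I c v = 0" and "i \<in> I"
    have "Klincomb I (restrict c I) v = Klincomb I c v"
      "Klincomb I (restrict (\<lambda>_. 0) I) v = Klincomb I (\<lambda>_. 0) v"
      by (rule Klincomb_cong; simp)+
    then have "Klincomb I (restrict c I) v = Klincomb I (restrict (\<lambda>_. 0) I) v"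
      using c(2) by (simp add: Klincomb_def)
    moreover have "restrict c I \<in> PiE I (\<lambda>_. K)" "restrict (\<lambda>_. 0) I \<in> PiE I (\<lambda>_. K)"
      using c(1) K_0_1 by simp_all
    ultimately have "restrict c I = restrict (\<lambda>_. 0) I"
      by (rule inj_onD[OF inj])
    then show "c i = 0"
      using \<open>i \<in> I\<close> by (metis restrict_apply')
  qed
next
  assume indep: "Kindep I v"
  show "inj_on (\<lambda>c. Klincomb I c v) (PiE I (\<lambda>_. K))"
  proof (rule inj_onI)
    fix c d assume c: "c \<in> PiE I (\<lambda>_. K)" and d: "d \<in> PiE I (\<lambda>_. K)"
      and eq: "Klincomb I c v = Klincomb I d v"
    have "Klincomb I (\<lambda>i. c i - d i) v = 0"
      using eq Klincomb_diff[of I c v d] by simp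
    moreover have "\<forall>i\<in>I. c i - d i \<in> K"
      using c d K_closed by (auto simp: PiE_iff)
    ultimately have "\<forall>i\<in>I. c i - d i = 0"
      using KindepD[OF indep, of "\<lambda>i. c i - d i"] by blast
    then show "c = d"
      using c d by (intro PiE_ext) auto
  qed
qed

lemma card_Kspan: "finite I \<Longrightarrow> Kindep I v \<Longrightarrow> card (Kspan I v) = card K ^ card I"
  unfolding Kspan_eq_image by (simp add: card_image inj_on_Klincomb_iff card_funcsetE)

lemma Kindep_if_card_Kspan:
  assumes "finite I" "card K ^ card I \<le> card (Kspan I v)"
  shows "Kindep I v"
proof -
  have fin: "finite (PiE I (\<lambda>_. K))"
    using assms(1) finite_K by (rule finite_PiE)
  have "card ((\<lambda>c. Klincomb I c v) ` PiE I (\<lambda>_. K)) = card (PiE I (\<lambda>_. K))"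
    using assms card_image_le[OF fin, of "\<lambda>c. Klincomb I c v"]
    unfolding Kspan_eq_image by (simp add: card_funcsetE)
  then show ?thesis
    using inj_on_iff_eq_card[OF fin] inj_on_Klincomb_iff by blast
qed

lemma Kspan_eq_if_card:
  assumes "finite I" "Kindep I v" "\<And>i. i \<in> I \<Longrightarrow> v i \<in> S"
    and "Ksubspace S" "finite S" "card S = card K ^ card I"
  shows "Kspan I v = S"
  using assms Kspan_subset_iff card_Kspan by (metis card_subset_eq)

lemma Kindep_subset:
  assumes "Kindep B v" "A \<subseteq> B" "finite B"
  shows "Kindep A v"
  unfolding Kindep_def
proof (intro allI impI ballI)
  fix c i assume c: "\<forall>i\<in>A. c i \<in> K" "Klincomb A c v = 0" and "i \<in> A"
  let ?d = "\<lambda>j. if j \<in> A then c j else 0"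
  have "Klincomb B ?d v = Klincomb A c v"
    unfolding Klincomb_def using assms(2,3)
    by (simp add: if_distrib[of "\<lambda>a. a *s _"] sum.If_cases Int_absorb1 cong: if_cong)
  moreover have "\<forall>j\<in>B. ?d j \<in> K"
    using c(1) K_0_1 by auto
  ultimately have "?d i = 0"
    using KindepD[OF assms(1), of ?d i] c(2) assms(2) \<open>i \<in> A\<close> by auto
  then show "c i = 0"
    using \<open>i \<in> A\<close> by simp
qed

lemma Kspan_inter_eq_0:
  assumes "finite A" "finite B" "A \<inter> B = {}" "Kindep (A \<union> B) v"
  shows "Kspan A v \<inter> Kspan B v = {0}"
proof -
  have "y = 0" if y: "y \<in> Kspan A v" "y \<in> Kspan B v" for y
  proof -
    obtain c where c: "y = Klincomb A c v" "\<forall>i\<in>A. c i \<in> K"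
      using y(1) unfolding Kspan_def by blast
    obtain d where d: "y = Klincomb B d v" "\<forall>i\<in>B. d i \<in> K"
      using y(2) unfolding Kspan_def by blast
    define e where "e i = (if i \<in> A then c i else - d i)" for i
    have "Klincomb (A \<union> B) e v = Klincomb A c v + Klincomb B (\<lambda>i. - d i) v"
      unfolding Klincomb_union[OF assms(1-3)] e_def using assms(3)
      by (intro arg_cong2[where f = "(+)"] Klincomb_cong) auto
    also have "\<dots> = 0"
      using c(1) d(1) by (simp flip: Klincomb_minus)
    finally have "Klincomb (A \<union> B) e v = 0" .
    moreover have "\<forall>i\<in>A \<union> B. e i \<in> K"
      using c(2) d(2) K_closed unfolding e_def by auto
    ultimately have "\<forall>i\<in>A \<union> B. e i = 0"
      using KindepD[OF assms(4), of e] by blast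
    then have "\<forall>i\<in>A. c i = 0"
      unfolding e_def by (metis UnI1)
    then have "Klincomb A c v = Klincomb A (\<lambda>_. 0) v"
      by (intro Klincomb_cong) auto
    then show "y = 0"
      using c(1) by (simp add: Klincomb_def)
  qed
  moreover have "0 \<in> Kspan A v" "0 \<in> Kspan B v"
    using Ksubspace_0 Ksubspace_Kspan by blast+
  ultimately show ?thesis
    by blast
qed

lemma not_in_Kspan_if_Kindep_insert:
  assumes "Kindep (insert i I) v" "i \<notin> I" "finite I"
  shows "v i \<notin> Kspan I v"
proof
  assume "v i \<in> Kspan I v"
  then obtain c where c: "v i = Klincomb I c v" "\<forall>j\<in>I. c j \<in> K"
    unfolding Kspan_def by blast
  define d where "d j = (if j = i then - 1 else c j)" for j
  have "Klincomb (insert i I) d v = d i *s v i + Klincomb I d v"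
    unfolding Klincomb_def sum.insert[OF assms(3,2)] ..
  also have "Klincomb I d v = Klincomb I c v"
    using assms(2) unfolding d_def by (intro Klincomb_cong) auto
  also have "d i *s v i = - v i"
    unfolding d_def by simp
  finally have "Klincomb (insert i I) d v = 0"
    using c(1) by simp
  moreover have "\<forall>j\<in>insert i I. d j \<in> K"
    using c(2) K_0_1 K_closed unfolding d_def by auto
  ultimately have "d i = 0"
    using KindepD[OF assms(1), of d i] by blast
  then show False
    unfolding d_def by simp
qed

lemma Kindep_insertI:
  assumes "Kindep I v" "v i \<notin> Kspan I v" "i \<notin> I" "finite I"
  shows "Kindep (insert i I) v"
  unfolding Kindep_def
proof (intro allI impI)
  fix c assume c: "\<forall>j\<in>insert i I. c j \<in> K" "Klincomb (insert i I) c v = 0"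
  have sum_eq: "c i *s v i + Klincomb I c v = 0"
    using c(2) unfolding Klincomb_def sum.insert[OF assms(4,3)] .
  have "c i = 0"
  proof (rule ccontr)
    assume "c i \<noteq> 0"
    then have "v i = inverse (c i) *s (c i *s v i)"
      by simp
    also have "c i *s v i = - Klincomb I c v"
      using sum_eq by (simp add: eq_neg_iff_add_eq_0)
    also have "inverse (c i) *s (- Klincomb I c v) = Klincomb I (\<lambda>j. inverse (c i) * - c j) v"
      unfolding Klincomb_minus Klincomb_scale ..
    finally have "v i = Klincomb I (\<lambda>j. inverse (c i) * - c j) v" .
    moreover have "\<forall>j\<in>I. inverse (c i) * - c j \<in> K"
      using c(1) K_closed by simp
    ultimately show False
      using assms(2) unfolding Kspan_def by blast
  qed
  then have "\<forall>j\<in>I. c j = 0"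
    using sum_eq KindepD[OF assms(1), of c] c(1) by simp
  then show "\<forall>j\<in>insert i I. c j = 0"
    using \<open>c i = 0\<close> by blast
qed

lemma Kindep_insert:
  assumes "i \<notin> I" "finite I"
  shows "Kindep (insert i I) v \<longleftrightarrow> Kindep I v \<and> v i \<notin> Kspan I v"
proof
  assume indep: "Kindep (insert i I) v"
  then show "Kindep I v \<and> v i \<notin> Kspan I v"
    using Kindep_subset[OF indep, of I] not_in_Kspan_if_Kindep_insert[OF indep assms] assms(2)
    by auto
next
  assume "Kindep I v \<and> v i \<notin> Kspan I v"
  then show "Kindep (insert i I) v"
    using Kindep_insertI[OF _ _ assms] by blast
qed

lemma Kindep_families_insert:
  assumes "x \<notin> I" "finite I"
  shows "{f \<in> PiE (insert x I) (\<lambda>_. V). Kindep (insert x I) f}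
    = (\<lambda>(g, y). g(x := y)) ` (SIGMA g:{g \<in> PiE I (\<lambda>_. V). Kindep I g}. V - Kspan I g)"
    (is "?L = (\<lambda>(g, y). g(x := y)) ` ?S")
proof
  have cong: "Kindep I (f(x := y)) = Kindep I f" "Kspan I (f(x := y)) = Kspan I f" for f y
    by (rule Kindep_cong Kspan_cong; use assms(1) in auto)+
  show "?L \<subseteq> (\<lambda>(g, y). g(x := y)) ` ?S"
  proof
    fix f assume f: "f \<in> ?L"
    have "f(x := undefined) \<in> PiE I (\<lambda>_. V)"
      using f fun_upd_in_PiE[OF assms(1)] by blast
    moreover have "f x \<in> V"
      using f by (auto simp: PiE_iff)
    moreover have "Kindep I f" "f x \<notin> Kspan I f"
      using f Kindep_insert[OF assms, of f] by auto
    ultimately have "(f(x := undefined), f x) \<in> ?S"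
      using cong by simp
    then show "f \<in> (\<lambda>(g, y). g(x := y)) ` ?S"
      by (intro image_eqI[where x = "(f(x := undefined), f x)"]) simp_all
  qed
  show "(\<lambda>(g, y). g(x := y)) ` ?S \<subseteq> ?L"
  proof
    fix f assume "f \<in> (\<lambda>(g, y). g(x := y)) ` ?S"
    then obtain g y where g: "g \<in> PiE I (\<lambda>_. V)" "Kindep I g" and y: "y \<in> V" "y \<notin> Kspan I g"
      and f: "f = g(x := y)"
      by (elim imageE SigmaE) auto
    have "Kindep (insert x I) f"
      using Kindep_insert[OF assms, of f] g(2) y(2) unfolding f cong by simp
    then show "f \<in> ?L"
      using PiE_fun_upd[OF y(1) g(1)] unfolding f by blast
  qed
qed

lemma card_Kindep_families:
  assumes "Ksubspace V" "finite V" "card V = card K ^ d" "finite I"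
  shows "card {f \<in> PiE I (\<lambda>_. V). Kindep I f} = num_indep_tuples (card K) d (card I)"
  using assms(4)
proof (induction I rule: finite_induct)
  case empty
  show ?case
    by (simp add: Kindep_def num_indep_tuples_def)
next
  case (insert x I)
  let ?A = "{g \<in> PiE I (\<lambda>_. V). Kindep I g}"
  have inj: "inj_on (\<lambda>(g, y). g(x := y)) (SIGMA g:?A. V - Kspan I g)"
  proof (rule inj_onI, clarify)
    fix g y g' y' assume g: "g \<in> PiE I (\<lambda>_. V)" "g' \<in> PiE I (\<lambda>_. V)" and eq: "g(x := y) = g'(x := y')"
    have "g z = g' z" for z
      using fun_cong[OF eq, of z] PiE_arb[OF g(1), of x] PiE_arb[OF g(2), of x] insert.hyps(2)
      by (cases "z = x") auto
    then show "g = g' \<and> y = y'"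
      using fun_cong[OF eq, of x] by auto
  qed
  have card_diff: "card (V - Kspan I g) = card K ^ d - card K ^ card I" if "g \<in> ?A" for g
  proof -
    have "Kspan I g \<subseteq> V"
      using that Kspan_subset_iff[OF insert.hyps(1) assms(1)] by (auto simp: PiE_iff)
    moreover have "card (Kspan I g) = card K ^ card I"
      using that card_Kspan[OF insert.hyps(1)] by blast
    ultimately show ?thesis
      using assms(2,3) by (simp add: card_Diff_subset finite_subset)
  qed
  have "card {f \<in> PiE (insert x I) (\<lambda>_. V). Kindep (insert x I) f} = card (SIGMA g:?A. V - Kspan I g)"
    unfolding Kindep_families_insert[OF insert.hyps(2,1)] by (rule card_image[OF inj])
  also have "\<dots> = (\<Sum>g\<in>?A. card (V - Kspan I g))"
    using insert.hyps(1) assms(2)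
    by (intro card_SigmaI finite_subset[OF _ finite_PiE[of I "\<lambda>_. V"]]) auto
  also have "\<dots> = card ?A * (card K ^ d - card K ^ card I)"
    using card_diff by simp
  also have "\<dots> = num_indep_tuples (card K) d (Suc (card I))"
    unfolding insert.IH num_indep_tuples_def by simp
  finally show ?case
    using insert.hyps by simp
qed

lemma coords_in_Kspan_iff:
  assumes "finite I" "finite J" "Kindep J f" "card (Kspan I u) = card K ^ card J"
  shows "(\<forall>i\<in>I. u i \<in> Kspan J f) \<longleftrightarrow> Kspan J f = Kspan I u"
proof
  assume "\<forall>i\<in>I. u i \<in> Kspan J f"
  then have "Kspan I u \<subseteq> Kspan J f"
    using assms(1) by (simp add: Kspan_subset_iff Ksubspace_Kspan)
  then show "Kspan J f = Kspan I u"
    using assms by (intro card_subset_eq[symmetric] finite_Kspan) (simp_all add: card_Kspan)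
qed (use assms(1) Kspan_superset in auto)

lemma Kbasis_adapted_iff:
  assumes "finite A" "finite B" "A \<inter> B = {}"
    and "Ksubspace U" "finite U" "card U = card K ^ card A"
    and "Ksubspace V" "finite V" "card V = card K ^ card B"
    and "card (U + V) = card K ^ (card A + card B)"
  shows "f \<in> PiE (A \<union> B) (\<lambda>_. U + V) \<and> Kindep (A \<union> B) f \<and> Kspan A f = U \<and> Kspan B f = V
    \<longleftrightarrow> f \<in> PiE (A \<union> B) (\<lambda>i. if i \<in> A then U else V) \<and> Kindep A (restrict f A) \<and> Kindep B (restrict f B)"
    (is "?adapted \<longleftrightarrow> f \<in> PiE (A \<union> B) ?F \<and> ?indep")
proof
  have restrict_indep: "Kindep A (restrict f A) = Kindep A f" "Kindep B (restrict f B) = Kindep B f"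
    by (rule Kindep_cong; simp)+
  have disj: "i \<notin> A" if "i \<in> B" for i
    using that assms(3) by blast
  {
    assume f: ?adapted
    have "f i \<in> ?F i" if "i \<in> A \<union> B" for i
      using that f disj assms(1,2) Kspan_superset[of A i f] Kspan_superset[of B i f] by auto
    moreover have ?indep
      unfolding restrict_indep using f assms(1,2) Kindep_subset[of "A \<union> B" f] by auto
    ultimately show "f \<in> PiE (A \<union> B) ?F \<and> ?indep"
      using f by (auto simp: PiE_iff)
  next
    assume f: "f \<in> PiE (A \<union> B) ?F \<and> ?indep"
    then have indep: "Kindep A f" "Kindep B f"
      unfolding restrict_indep by auto
    have in_U: "f i \<in> U" if "i \<in> A" for i
      using PiE_mem[of f "A \<union> B" ?F i] f that by simp
    have in_V: "f i \<in> V" if "i \<in> B" for i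
      using PiE_mem[of f "A \<union> B" ?F i] f that disj by simp
    have span_A: "Kspan A f = U"
      using Kspan_eq_if_card[OF assms(1) indep(1) in_U assms(4-6)] .
    have span_B: "Kspan B f = V"
      using Kspan_eq_if_card[OF assms(2) indep(2) in_V assms(7-9)] .
    have "Kspan (A \<union> B) f = U + V"
      using Kspan_union[OF assms(1-3)] span_A span_B by simp
    then have "Kindep (A \<union> B) f"
      using assms(1-3,10) by (intro Kindep_if_card_Kspan) (simp_all add: card_Un_disjoint)
    moreover have "f \<in> PiE (A \<union> B) (\<lambda>_. U + V)"
      using f in_U in_V set_plus_intro[OF _ Ksubspace_0[OF assms(7)], of _ U]
        set_plus_intro[OF Ksubspace_0[OF assms(4)], of _ V] by (auto simp: PiE_iff)
    ultimately show ?adapted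
      using span_A span_B by blast
  }
qed

lemma card_Kbases_adapted:
  assumes "finite A" "finite B" "A \<inter> B = {}"
    and "Ksubspace U" "finite U" "card U = card K ^ card A"
    and "Ksubspace V" "finite V" "card V = card K ^ card B"
    and "card (U + V) = card K ^ (card A + card B)"
  shows "card {f \<in> PiE (A \<union> B) (\<lambda>_. U + V). Kindep (A \<union> B) f \<and> Kspan A f = U \<and> Kspan B f = V}
    = num_indep_tuples (card K) (card A) (card A) * num_indep_tuples (card K) (card B) (card B)"
proof -
  let ?F = "\<lambda>i. if i \<in> A then U else V"
  have "{f \<in> PiE (A \<union> B) (\<lambda>_. U + V). Kindep (A \<union> B) f \<and> Kspan A f = U \<and> Kspan B f = V}
    = {f \<in> PiE (A \<union> B) ?F. Kindep A (restrict f A) \<and> Kindep B (restrict f B)}"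
    using Kbasis_adapted_iff[OF assms] by blast
  also have "card \<dots> = card {g \<in> PiE A ?F. Kindep A g} * card {h \<in> PiE B ?F. Kindep B h}"
    using assms(3) by (rule card_PiE_Un_restrict)
  also have "PiE A ?F = PiE A (\<lambda>_. U)"
    by (rule PiE_cong) simp
  also have "PiE B ?F = PiE B (\<lambda>_. V)"
    using assms(3) by (intro PiE_cong) force
  finally show ?thesis
    using assms by (simp add: card_Kindep_families)
qed

end

section \<open>The rank of a vector\<close>

lemma subfield_module_field:
  fixes K :: "'a::{field,finite} set"
  shows "is_subfield K \<Longrightarrow> subfield_module ((*) :: 'a \<Rightarrow> 'a \<Rightarrow> 'a) K"
  by unfold_locales (auto simp: ring_distribs)

context
  fixes K :: "'a::{field,finite} set"
  assumes subfield: "is_subfield K"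
begin

interpretation F: subfield_module "(*) :: 'a \<Rightarrow> 'a \<Rightarrow> 'a" K
  by (rule subfield_module_field[OF subfield])

lemma lin_indep_over_iff_Kindep: "lin_indep_over K x T \<longleftrightarrow> F.Kindep T x"
  unfolding lin_indep_over_def F.Kindep_def F.Klincomb_def ..

lemma rk_basisE:
  obtains T where "T \<subseteq> {..<n}" "F.Kindep T x" "card T = rk K n x"
    "F.Kspan {..<n} x = F.Kspan T x"
proof -
  let ?R = "{card T | T. T \<subseteq> {..<n} \<and> lin_indep_over K x T}"
  have fin: "finite ?R"
    by (rule finite_subset[of _ "card ` Pow {..<n}"]) auto
  moreover have "card {} \<in> ?R"
    by (auto intro!: exI[of _ "{}"] simp: lin_indep_over_def)
  ultimately have "rk K n x \<in> ?R"
    unfolding rk_def by (intro Max_in) auto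
  then obtain T where T: "T \<subseteq> {..<n}" "F.Kindep T x" "card T = rk K n x"
    by (auto simp: lin_indep_over_iff_Kindep)
  have fin_T: "finite T"
    using T(1) finite_subset by blast
  have "x i \<in> F.Kspan T x" if "i < n" for i
  proof (rule ccontr)
    assume not_in: "x i \<notin> F.Kspan T x"
    then have "i \<notin> T"
      using F.Kspan_superset[OF fin_T] by blast
    then have "F.Kindep (insert i T) x"
      using F.Kindep_insertI[OF T(2) not_in _ fin_T] by blast
    then have "card (insert i T) \<le> rk K n x"
      unfolding rk_def using fin T(1) that by (intro Max_ge) (auto simp: lin_indep_over_iff_Kindep)
    then show False
      using T(3) \<open>i \<notin> T\<close> fin_T by simp
  qed
  then have "F.Kspan {..<n} x = F.Kspan T x"
    using F.Kspan_subset_iff[of "{..<n}" "F.Kspan T x" x] F.Ksubspace_Kspan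
      F.Kspan_mono[of "{..<n}" T x] T(1) by auto
  with T show ?thesis
    using that by blast
qed

lemma card_Kspan_rk: "card (F.Kspan {..<n} x) = card K ^ rk K n x"
proof -
  obtain T where "T \<subseteq> {..<n}" "F.Kindep T x" "card T = rk K n x" "F.Kspan {..<n} x = F.Kspan T x"
    by (rule rk_basisE)
  then show ?thesis
    using F.card_Kspan finite_subset by (metis finite_lessThan)
qed

lemma rk_le_iff_card_Kspan: "rk K n x \<le> k \<longleftrightarrow> card (F.Kspan {..<n} x) \<le> card K ^ k"
  using card_Kspan_rk card_subfield_ge_2[OF subfield] by simp

lemma rk_le_if_coords_in_Kspan:
  assumes "finite I" "\<And>i. i < n \<Longrightarrow> x i \<in> F.Kspan I f"
  shows "rk K n x \<le> card I"
proof -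
  have "F.Kspan {..<n} x \<subseteq> F.Kspan I f"
    using assms(2) by (simp add: F.Kspan_subset_iff F.Ksubspace_Kspan)
  then have "card (F.Kspan {..<n} x) \<le> card (F.Kspan I f)"
    using assms(1) by (intro card_mono F.finite_Kspan)
  also have "\<dots> \<le> card K ^ card I"
    using assms(1) by (rule F.card_Kspan_le)
  finally show ?thesis
    by (simp add: rk_le_iff_card_Kspan)
qed

end

section \<open>Subspaces of GF(q)^r and the Gaussian binomial\<close>

lemma sum_fun_apply: "(\<Sum>j\<in>A. f j) i = (\<Sum>j\<in>A. f j i)"
  by (induction A rule: infinite_finite_induct) auto

lemma subfield_module_fun:
  fixes K :: "'a::{field,finite} set"
  shows "is_subfield K \<Longrightarrow> subfield_module (\<lambda>a (v :: nat \<Rightarrow> 'a) i. a * v i) K"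
  by unfold_locales (auto simp: ring_distribs fun_eq_iff)

definition unit_vec :: "nat \<Rightarrow> nat \<Rightarrow> 'a::{zero,one}" where
  "unit_vec j i = (if i = j then 1 else 0)"

context
  fixes K :: "'a::{field,finite} set"
  assumes subfield: "is_subfield K"
begin

interpretation G: subfield_module "\<lambda>a (v :: nat \<Rightarrow> 'a) i. a * v i" K
  by (rule subfield_module_fun[OF subfield])

lemma Klincomb_fun_apply: "G.Klincomb I c v i = (\<Sum>j\<in>I. c j * v j i)"
  unfolding G.Klincomb_def by (simp add: sum_fun_apply)

lemma Kcomb_eq_Klincomb: "Kcomb c vs s = G.Klincomb {..<s} c vs"
  unfolding Kcomb_def by (simp add: fun_eq_iff Klincomb_fun_apply)

lemma Klincomb_unit_vec: "G.Klincomb {..<r} c unit_vec i = (if i < r then c i else 0)"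
  unfolding Klincomb_fun_apply unit_vec_def by (simp add: if_distrib[of "\<lambda>a. _ * a"] cong: if_cong)

lemma Kvecs_eq_Kspan: "Kvecs K r = G.Kspan {..<r} unit_vec"
proof
  show "Kvecs K r \<subseteq> G.Kspan {..<r} unit_vec"
  proof
    fix v assume v: "v \<in> Kvecs K r"
    then have "v = G.Klincomb {..<r} v unit_vec"
      by (auto simp: fun_eq_iff Klincomb_unit_vec Kvecs_def)
    then show "v \<in> G.Kspan {..<r} unit_vec"
      unfolding G.Kspan_def using v by (auto simp: Kvecs_def)
  qed
  show "G.Kspan {..<r} unit_vec \<subseteq> Kvecs K r"
    unfolding G.Kspan_def Kvecs_def using G.K_0_1 by (auto simp: Klincomb_unit_vec)
qed

lemma Kindep_unit_vec: "G.Kindep {..<r} unit_vec"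
  unfolding G.Kindep_def by (metis Klincomb_unit_vec lessThan_iff zero_fun_apply)

lemma Ksubspace_Kvecs: "G.Ksubspace (Kvecs K r)"
  and finite_Kvecs: "finite (Kvecs K r)"
  and card_Kvecs: "card (Kvecs K r) = card K ^ r"
  unfolding Kvecs_eq_Kspan
  using G.Ksubspace_Kspan G.finite_Kspan G.card_Kspan[OF _ Kindep_unit_vec] by auto

lemma is_Ksubspace_iff: "is_Ksubspace K r V \<longleftrightarrow> V \<subseteq> Kvecs K r \<and> G.Ksubspace V"
  unfolding is_Ksubspace_def G.Ksubspace_def by (simp add: zero_fun_def plus_fun_def)

lemma has_Kdim_iff: "has_Kdim K V s \<longleftrightarrow> (\<exists>vs. G.Kindep {..<s} vs \<and> V = G.Kspan {..<s} vs)"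
proof -
  have indep_iff: "(\<forall>c. (\<forall>j<s. c j \<in> K) \<longrightarrow> Kcomb c vs s = (\<lambda>_. 0) \<longrightarrow> (\<forall>j<s. c j = 0))
      \<longleftrightarrow> G.Kindep {..<s} vs" for vs
    unfolding G.Kindep_def Kcomb_eq_Klincomb zero_fun_def by (simp only: Ball_def lessThan_iff)
  have span_eq: "{Kcomb c vs s | c. \<forall>j<s. c j \<in> K} = G.Kspan {..<s} vs" for vs
    unfolding G.Kspan_def Kcomb_eq_Klincomb by (simp only: Ball_def lessThan_iff)
  have "\<forall>j<s. vs j \<in> G.Kspan {..<s} vs" for vs
    by (simp add: G.Kspan_superset)
  then show ?thesis
    unfolding has_Kdim_def indep_iff span_eq by blast
qed

lemma Kspan_is_Ksubspace_has_Kdim: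
  assumes "g \<in> PiE {..<s} (\<lambda>_. Kvecs K r)" "G.Kindep {..<s} g"
  shows "is_Ksubspace K r (G.Kspan {..<s} g) \<and> has_Kdim K (G.Kspan {..<s} g) s"
proof -
  have "G.Kspan {..<s} g \<subseteq> Kvecs K r"
    using assms(1) Ksubspace_Kvecs by (simp add: G.Kspan_subset_iff PiE_iff)
  then show ?thesis
    unfolding is_Ksubspace_iff has_Kdim_iff using G.Ksubspace_Kspan assms(2) by blast
qed

lemma card_Kbases_of_Ksubspace:
  assumes "is_Ksubspace K r V" "has_Kdim K V s"
  shows "card {g \<in> PiE {..<s} (\<lambda>_. Kvecs K r). G.Kindep {..<s} g \<and> V = G.Kspan {..<s} g}
    = num_indep_tuples (card K) s s"
proof -
  obtain vs where vs: "G.Kindep {..<s} vs" "V = G.Kspan {..<s} vs"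
    using assms(2) unfolding has_Kdim_iff by blast
  have V: "G.Ksubspace V" "finite V" "card V = card K ^ s" "V \<subseteq> Kvecs K r"
    using assms(1) G.Ksubspace_Kspan G.finite_Kspan G.card_Kspan[OF _ vs(1)]
    unfolding vs(2) is_Ksubspace_iff by auto
  have "{g \<in> PiE {..<s} (\<lambda>_. Kvecs K r). G.Kindep {..<s} g \<and> V = G.Kspan {..<s} g}
      = {g \<in> PiE {..<s} (\<lambda>_. V). G.Kindep {..<s} g}"
  proof (intro Collect_cong iffI)
    fix g assume "g \<in> PiE {..<s} (\<lambda>_. Kvecs K r) \<and> G.Kindep {..<s} g \<and> V = G.Kspan {..<s} g"
    then show "g \<in> PiE {..<s} (\<lambda>_. V) \<and> G.Kindep {..<s} g"
      by (auto simp: PiE_iff intro: G.Kspan_superset)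
  next
    fix g assume g: "g \<in> PiE {..<s} (\<lambda>_. V) \<and> G.Kindep {..<s} g"
    then have "G.Kspan {..<s} g = V"
      using V by (intro G.Kspan_eq_if_card) (auto simp: PiE_iff)
    then show "g \<in> PiE {..<s} (\<lambda>_. Kvecs K r) \<and> G.Kindep {..<s} g \<and> V = G.Kspan {..<s} g"
      using g V(4) by (auto simp: PiE_iff)
  qed
  then show ?thesis
    using G.card_Kindep_families[OF V(1-3) finite_lessThan[of s]] by simp
qed

lemma qbinom_mult: "qbinom K r s * num_indep_tuples (card K) s s = num_indep_tuples (card K) r s"
proof -
  define Q where "Q = {V. is_Ksubspace K r V \<and> has_Kdim K V s}"
  define B where "B = {g \<in> PiE {..<s} (\<lambda>_. Kvecs K r). G.Kindep {..<s} g}"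
  have "card B = card Q * num_indep_tuples (card K) s s"
  proof (rule card_by_uniform_fibres[where R = "\<lambda>V g. V = G.Kspan {..<s} g"])
    have "Q \<subseteq> Pow (Kvecs K r)"
      unfolding Q_def is_Ksubspace_iff by blast
    then show "finite Q"
      by (rule finite_subset) (simp add: finite_Kvecs)
    show "finite B"
      unfolding B_def using finite_Kvecs
      by (intro finite_subset[OF _ finite_PiE[of "{..<s}" "\<lambda>_. Kvecs K r"]]) auto
    show "\<exists>!V. V \<in> Q \<and> V = G.Kspan {..<s} g" if "g \<in> B" for g
      using that Kspan_is_Ksubspace_has_Kdim unfolding B_def Q_def by auto
    show "card {g \<in> B. V = G.Kspan {..<s} g} = num_indep_tuples (card K) s s" if "V \<in> Q" for V
      using that card_Kbases_of_Ksubspace unfolding B_def Q_def by (simp add: conj_assoc)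
  qed
  moreover have "card B = num_indep_tuples (card K) r s"
    unfolding B_def using G.card_Kindep_families[OF Ksubspace_Kvecs finite_Kvecs card_Kvecs[of r] finite_lessThan[of s]]
    by simp
  ultimately show ?thesis
    unfolding qbinom_def Q_def by simp
qed

end

section \<open>Points between two centres\<close>

lemma finite_vecspace: "finite (vecspace n :: (nat \<Rightarrow> 'a::{finite,zero}) set)"
proof (rule inj_on_finite[where f = "\<lambda>x. restrict x {..<n}" and B = "PiE {..<n} (\<lambda>_. UNIV)"])
  show "inj_on (\<lambda>x. restrict x {..<n}) (vecspace n)"
  proof (rule inj_onI, rule ext)
    fix x y i assume x: "x \<in> vecspace n" and y: "y \<in> vecspace n"
      and eq: "restrict x {..<n} = restrict y {..<n}"
    show "x i = y i"
      using fun_cong[OF eq, of i] x y unfolding vecspace_def by (cases "i < n") simp_all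
  qed
qed (auto simp: finite_PiE image_subset_iff simp del: restrict_apply)

context
  fixes K :: "'a::{field,finite} set" and n r s :: nat and c1 c2 :: "nat \<Rightarrow> 'a"
  assumes subfield: "is_subfield K" and rank: "dR K n c1 c2 = r" and s_le_r: "s \<le> r"
begin

interpretation F: subfield_module "(*) :: 'a \<Rightarrow> 'a \<Rightarrow> 'a" K
  by (rule subfield_module_field[OF subfield])

abbreviation coord_span :: "(nat \<Rightarrow> 'a) \<Rightarrow> 'a set" where
  "coord_span v \<equiv> F.Kspan {..<n} v"

abbreviation splits :: "(nat \<Rightarrow> 'a) \<Rightarrow> (nat \<Rightarrow> 'a) \<Rightarrow> bool" where
  "splits x f \<equiv> \<forall>i<n. c1 i - x i \<in> F.Kspan {..<s} f \<and> c2 i - x i \<in> F.Kspan {s..<r} f"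

lemma index_split: "{..<s} \<union> {s..<r} = {..<r}" "{..<s} \<inter> {s..<r} = {}"
  using s_le_r by auto

lemma card_coord_span_diff: "card (coord_span (\<lambda>i. c1 i - c2 i)) = card K ^ r"
  using card_Kspan_rk[OF subfield] rank unfolding dR_def by simp

lemma mem_rball_inter_iff:
  "x \<in> rball K n s c1 \<inter> rball K n (r - s) c2
    \<longleftrightarrow> x \<in> vecspace n \<and> rk K n (\<lambda>i. c1 i - x i) \<le> s \<and> rk K n (\<lambda>i. c2 i - x i) \<le> r - s"
  unfolding rball_def dR_def by auto

lemma split_point_unique:
  assumes "F.Kindep {..<r} f" "x \<in> vecspace n" "x' \<in> vecspace n" "splits x f" "splits x' f"
  shows "x = x'"
proof (rule ext)
  fix i
  show "x i = x' i"
  proof (cases "i < n")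
    case True
    have "c1 i - x i \<in> F.Kspan {..<s} f" "c1 i - x' i \<in> F.Kspan {..<s} f"
      "c2 i - x i \<in> F.Kspan {s..<r} f" "c2 i - x' i \<in> F.Kspan {s..<r} f"
      using assms(4,5) True by auto
    then have "(c1 i - x i) - (c1 i - x' i) \<in> F.Kspan {..<s} f"
      "(c2 i - x i) - (c2 i - x' i) \<in> F.Kspan {s..<r} f"
      by (meson F.Ksubspace_diff F.Ksubspace_Kspan)+
    then have "x' i - x i \<in> F.Kspan {..<s} f \<inter> F.Kspan {s..<r} f"
      by simp
    also have "\<dots> = {0}"
      using assms(1) index_split by (intro F.Kspan_inter_eq_0) auto
    finally show ?thesis
      by simp
  next
    case False
    then show ?thesis
      using assms(2,3) unfolding vecspace_def by simp
  qed
qed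

lemma split_point_exists:
  assumes "f \<in> PiE {..<r} (\<lambda>_. coord_span (\<lambda>i. c1 i - c2 i))" "F.Kindep {..<r} f"
  shows "\<exists>x \<in> rball K n s c1 \<inter> rball K n (r - s) c2. splits x f"
proof -
  have "F.Kspan {..<r} f = coord_span (\<lambda>i. c1 i - c2 i)"
    using assms card_coord_span_diff F.Ksubspace_Kspan F.finite_Kspan
    by (intro F.Kspan_eq_if_card) (auto simp: PiE_iff)
  then have "coord_span (\<lambda>i. c1 i - c2 i) = F.Kspan {..<s} f + F.Kspan {s..<r} f"
    using F.Kspan_union[of "{..<s}" "{s..<r}" f] index_split by simp
  then have "c1 i - c2 i \<in> F.Kspan {..<s} f + F.Kspan {s..<r} f" if "i < n" for i
    using F.Kspan_superset[of "{..<n}" i "\<lambda>i. c1 i - c2 i"] that by simp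
  then have "\<forall>i. \<exists>a. i < n \<longrightarrow> a \<in> F.Kspan {..<s} f \<and> (c1 i - c2 i) - a \<in> F.Kspan {s..<r} f"
    by (metis add_diff_cancel_left' set_plus_elim)
  then obtain g where g: "\<And>i. i < n \<Longrightarrow> g i \<in> F.Kspan {..<s} f \<and> (c1 i - c2 i) - g i \<in> F.Kspan {s..<r} f"
    by metis
  define x where "x i = (if i < n then c1 i - g i else 0)" for i
  have "splits x f"
  proof (intro allI impI conjI)
    fix i assume "i < n"
    then show "c1 i - x i \<in> F.Kspan {..<s} f"
      using g unfolding x_def by simp
    have "c2 i - x i = - ((c1 i - c2 i) - g i)"
      using \<open>i < n\<close> unfolding x_def by simp
    then show "c2 i - x i \<in> F.Kspan {s..<r} f"
      using g[OF \<open>i < n\<close>] F.Ksubspace_neg[OF F.Ksubspace_Kspan] by metis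
  qed
  moreover have "rk K n (\<lambda>i. c1 i - x i) \<le> card {..<s}"
    by (rule rk_le_if_coords_in_Kspan[OF subfield]) (use \<open>splits x f\<close> in auto)
  moreover have "rk K n (\<lambda>i. c2 i - x i) \<le> card {s..<r}"
    by (rule rk_le_if_coords_in_Kspan[OF subfield]) (use \<open>splits x f\<close> in auto)
  moreover have "x \<in> vecspace n"
    unfolding vecspace_def x_def by simp
  ultimately have "x \<in> rball K n s c1 \<inter> rball K n (r - s) c2"
    unfolding mem_rball_inter_iff by simp
  with \<open>splits x f\<close> show ?thesis
    by blast
qed

lemma coord_spans_complementary:
  assumes "x \<in> rball K n s c1 \<inter> rball K n (r - s) c2"
  shows "coord_span (\<lambda>i. c1 i - c2 i) = coord_span (\<lambda>i. c1 i - x i) + coord_span (\<lambda>i. c2 i - x i)"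
    and "card (coord_span (\<lambda>i. c1 i - x i)) = card K ^ s"
    and "card (coord_span (\<lambda>i. c2 i - x i)) = card K ^ (r - s)"
proof -
  let ?U = "coord_span (\<lambda>i. c1 i - x i)" and ?V = "coord_span (\<lambda>i. c2 i - x i)"
  have "(c1 i - x i) + - (c2 i - x i) \<in> ?U + ?V" if "i < n" for i
    using that by (intro set_plus_intro F.Ksubspace_neg[OF F.Ksubspace_Kspan] F.Kspan_superset) auto
  then have sub: "coord_span (\<lambda>i. c1 i - c2 i) \<subseteq> ?U + ?V"
    by (simp add: F.Kspan_subset_iff F.Ksubspace_set_plus F.Ksubspace_Kspan)
  have le: "card ?U \<le> card K ^ s" "card ?V \<le> card K ^ (r - s)"
    using assms rk_le_iff_card_Kspan[OF subfield] unfolding mem_rball_inter_iff by blast+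
  have card_eq: "card (coord_span (\<lambda>i. c1 i - c2 i)) = card K ^ (s + (r - s))"
    using card_coord_span_diff s_le_r by simp
  have "0 < card K"
    using card_subfield_ge_2[OF subfield finite] by simp
  note fin = F.finite_Kspan[OF finite_lessThan]
  show "coord_span (\<lambda>i. c1 i - c2 i) = ?U + ?V" "card ?U = card K ^ s" "card ?V = card K ^ (r - s)"
    using set_plus_eq_if_card_bounds[OF fin fin sub \<open>0 < card K\<close> le card_eq] by simp_all
qed

lemma card_bases_splitting_at:
  assumes "x \<in> rball K n s c1 \<inter> rball K n (r - s) c2"
  shows "card {f \<in> PiE {..<r} (\<lambda>_. coord_span (\<lambda>i. c1 i - c2 i)). F.Kindep {..<r} f \<and> splits x f}
    = num_indep_tuples (card K) s s * num_indep_tuples (card K) (r - s) (r - s)"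
proof -
  let ?U = "coord_span (\<lambda>i. c1 i - x i)" and ?V = "coord_span (\<lambda>i. c2 i - x i)"
  note complementary = coord_spans_complementary[OF assms]
  have "{f \<in> PiE {..<r} (\<lambda>_. coord_span (\<lambda>i. c1 i - c2 i)). F.Kindep {..<r} f \<and> splits x f}
    = {f \<in> PiE ({..<s} \<union> {s..<r}) (\<lambda>_. ?U + ?V). F.Kindep ({..<s} \<union> {s..<r}) f \<and>
      F.Kspan {..<s} f = ?U \<and> F.Kspan {s..<r} f = ?V}"
  proof (intro Collect_cong conj_cong refl)
    fix f assume "F.Kindep ({..<s} \<union> {s..<r}) f"
    then have "F.Kindep {..<s} f" "F.Kindep {s..<r} f"
      by (auto intro: F.Kindep_subset)
    then have "(\<forall>i\<in>{..<n}. c1 i - x i \<in> F.Kspan {..<s} f) \<longleftrightarrow> F.Kspan {..<s} f = ?U"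
      "(\<forall>i\<in>{..<n}. c2 i - x i \<in> F.Kspan {s..<r} f) \<longleftrightarrow> F.Kspan {s..<r} f = ?V"
      using complementary(2,3) by (simp_all add: F.coords_in_Kspan_iff)
    then show "splits x f \<longleftrightarrow> F.Kspan {..<s} f = ?U \<and> F.Kspan {s..<r} f = ?V"
      by auto
  qed (simp_all add: index_split complementary(1))
  also have "card \<dots> = num_indep_tuples (card K) (card {..<s}) (card {..<s})
      * num_indep_tuples (card K) (card {s..<r}) (card {s..<r})"
    by (rule F.card_Kbases_adapted)
      (use index_split(2) complementary card_coord_span_diff s_le_r in
        \<open>simp_all add: F.Ksubspace_Kspan F.finite_Kspan\<close>)
  finally show ?thesis
    by simp
qed

lemma card_rball_inter_mult:
  "card (rball K n s c1 \<inter> rball K n (r - s) c2)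
      * (num_indep_tuples (card K) s s * num_indep_tuples (card K) (r - s) (r - s))
    = num_indep_tuples (card K) r r"
proof -
  let ?X = "rball K n s c1 \<inter> rball K n (r - s) c2"
  let ?B = "{f \<in> PiE {..<r} (\<lambda>_. coord_span (\<lambda>i. c1 i - c2 i)). F.Kindep {..<r} f}"
  have "card ?B = card ?X * (num_indep_tuples (card K) s s * num_indep_tuples (card K) (r - s) (r - s))"
  proof (rule card_by_uniform_fibres[where R = splits])
    show "finite ?X"
      using finite_vecspace[of n] by (rule finite_subset[rotated]) (auto simp: rball_def)
    show "finite ?B"
      using F.finite_Kspan[OF finite_lessThan]
      by (intro finite_subset[OF _ finite_PiE[of "{..<r}"]]) auto
    show "\<exists>!x. x \<in> ?X \<and> splits x f" if "f \<in> ?B" for f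
    proof -
      have f: "f \<in> PiE {..<r} (\<lambda>_. coord_span (\<lambda>i. c1 i - c2 i))" "F.Kindep {..<r} f"
        using that by auto
      obtain x where x: "x \<in> ?X" "splits x f"
        using split_point_exists[OF f] by blast
      show ?thesis
      proof (rule ex1I[of _ x])
        fix y assume "y \<in> ?X \<and> splits y f"
        then show "y = x"
          using split_point_unique[OF f(2), of y x] x unfolding mem_rball_inter_iff by blast
      qed (use x in blast)
    qed
    show "card {f \<in> ?B. splits x f}
        = num_indep_tuples (card K) s s * num_indep_tuples (card K) (r - s) (r - s)" if "x \<in> ?X" for x
      using card_bases_splitting_at[OF that] by (simp add: conj_assoc)
  qed
  moreover have "card ?B = num_indep_tuples (card K) r r"
    using F.card_Kindep_families[OF F.Ksubspace_Kspan F.finite_Kspan[OF finite_lessThan]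
        card_coord_span_diff finite_lessThan[of r]]
    by simp
  ultimately show ?thesis
    by simp
qed

end

theorem proposition4:
  fixes K :: "'a::{field,finite} set" and n r s :: nat and c1 c2 :: "nat \<Rightarrow> 'a"
  assumes "is_subfield K"
    and "c1 \<in> vecspace n" and "c2 \<in> vecspace n"
    and "dR K n c1 c2 = r"
    and "s \<le> r"
  shows "card (rball K n s c1 \<inter> rball K n (r - s) c2) = card K ^ (s * (r - s)) * qbinom K r s"
proof -
  let ?N = "num_indep_tuples (card K)"
  let ?P = "?N s s * ?N (r - s) (r - s)"
  have "card (rball K n s c1 \<inter> rball K n (r - s) c2) * ?P = ?N r r"
    by (rule card_rball_inter_mult[OF assms(1,4,5)])
  also have "?N r r = card K ^ (s * (r - s)) * ?N r s * ?N (r - s) (r - s)"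
    by (rule num_indep_tuples_split[OF assms(5)])
  also have "?N r s = qbinom K r s * ?N s s"
    by (rule qbinom_mult[OF assms(1), symmetric])
  finally have "card (rball K n s c1 \<inter> rball K n (r - s) c2) * ?P
      = (card K ^ (s * (r - s)) * qbinom K r s) * ?P"
    by (simp only: mult.assoc)
  moreover have "?P \<noteq> 0"
    using num_indep_tuples_pos[OF card_subfield_ge_2[OF assms(1) finite]] by simp
  ultimately show ?thesis
    by simp
qed

end
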